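(* Let $\delta:C_+\oplus C_-\to C_+\oplus C_-$, $C_\pm=\mathbb{Z}_D^n$, be a good boundary operator (with respect to $n'\le n$). Let $\mathcal{V}\le C$ be spanned by the first $n'$ standard basis vectors of $C_+$ and the first $n'$ standard basis vectors of $C_-$, and $\mathcal{V}^>$ by the remaining standard basis vectors; let $W$ be the projection onto $\mathcal{V}$ along $\mathcal{V}^>$, $S^>=W\delta(\mathcal{V}^>)$, $\mathcal{V}'=\mathcal{V}/S^>$, $\varphi(h)=Wh+S^>$, and $\delta'$, $P'$ the induced maps on $\mathcal{V}'$ given by $\delta'(x+S^>)=\varphi(\delta x)$, $P'(x+S^>)=\varphi(Px)$. Write $\mathcal{V}'_\pm$ for the $\pm1$ eigenspaces of $P'$ and $\delta'_{-+}:\mathcal{V}'_+\to\mathcal{V}'_-$, $\delta'_{+-}:\mathcal{V}'_-\to\mathcal{V}'_+$ for the components of $\delta'$ (and similarly $\delta_{-+}:C_+\to C_-$, $\delta_{+-}:C_-\to C_+$). Then $\dim\mathcal{V}'_\pm=2n'-n$ and $\dim\ker\delta'_{-+}=\dim\ker\delta_{-+}-(n-n')$, $\dim\operatorname{im}\delta'_{-+}=\dim\operatorname{im}\delta_{-+}-(n-n')$, and similarly $\dim\ker\delta'_{+-}=\dim\ker\delta_{+-}-(n-n')$, $\dim\operatorname{im}\delta'_{+-}=\dim\operatorname{im}\delta_{+-}-(n-n')$.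
   Context: $D$ is an odd prime, $\mathbb{Z}_D$ the field with $D$ elements. $C=C_+\oplus C_-$ with $C_\pm=\mathbb{Z}_D^n$ and $P=\begin{bmatrix}I_n&0\\0&-I_n\end{bmatrix}$. A boundary operator is a linear map $\delta:C\to C$ with $\delta^2=0$ and $\delta P+P\delta=0$ (so $\delta=\begin{bmatrix}0&\delta_{+-}\\ \delta_{-+}&0\end{bmatrix}$). Fix $n'\le n$. Such a $\delta$ is called good if neither $\ker\delta\cap C_+$ nor $\ker\delta\cap C_-$ contains a nonzero vector supported on the last $n-n'$ coordinates (of $C_+$, resp. $C_-$). *)

theory Defs
  imports Main HOL.Vector_Spaces "HOL-Library.Function_Algebras" "HOL-Library.Product_Plus" "HOL-Computational_Algebra.Primes"
begin

text \<open>Vectors of \<open>C_\<pm> = Z_D^n\<close> are modelled as functions \<open>nat \<Rightarrow> 'a\<close> vanishing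
  outside \<open>{0..<n}\<close>; an element of \<open>C = C_+ \<oplus> C_-\<close> is a pair \<open>(u, w)\<close> with
  \<open>u \<in> C_+\<close> and \<open>w \<in> C_-\<close>.\<close>

type_synonym 'a cvec = "(nat \<Rightarrow> 'a) \<times> (nat \<Rightarrow> 'a)"

definition Cpm :: "nat \<Rightarrow> (nat \<Rightarrow> 'a::zero) set" where
  "Cpm n = {u. \<forall>i\<ge>n. u i = 0}"

definition Ctot :: "nat \<Rightarrow> 'a::zero cvec set" where
  "Ctot n = Cpm n \<times> Cpm n"

definition scaleF :: "'a::times \<Rightarrow> (nat \<Rightarrow> 'a) \<Rightarrow> (nat \<Rightarrow> 'a)" where
  "scaleF c u = (\<lambda>i. c * u i)"

definition scaleC :: "'a::times \<Rightarrow> 'a cvec \<Rightarrow> 'a cvec" where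
  "scaleC c x = (scaleF c (fst x), scaleF c (snd x))"

definition Pop :: "'a::uminus cvec \<Rightarrow> 'a cvec" where
  "Pop x = (fst x, - snd x)"

definition linear_on ::
  "('a \<Rightarrow> 'b \<Rightarrow> 'b) \<Rightarrow> ('a \<Rightarrow> 'c \<Rightarrow> 'c) \<Rightarrow> 'b::plus set \<Rightarrow> ('b \<Rightarrow> 'c::plus) \<Rightarrow> bool" where
  "linear_on s1 s2 A f \<longleftrightarrow>
     (\<forall>x\<in>A. \<forall>y\<in>A. f (x + y) = f x + f y) \<and> (\<forall>c. \<forall>x\<in>A. f (s1 c x) = s2 c (f x))"

definition boundary_op :: "nat \<Rightarrow> ('a::field cvec \<Rightarrow> 'a cvec) \<Rightarrow> bool" where
  "boundary_op n \<delta> \<longleftrightarrow>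
     \<delta> ` Ctot n \<subseteq> Ctot n \<and> linear_on scaleC scaleC (Ctot n) \<delta> \<and>
     (\<forall>x\<in>Ctot n. \<delta> (\<delta> x) = 0) \<and>
     (\<forall>x\<in>Ctot n. \<delta> (Pop x) + Pop (\<delta> x) = 0)"

definition good :: "nat \<Rightarrow> nat \<Rightarrow> ('a::field cvec \<Rightarrow> 'a cvec) \<Rightarrow> bool" where
  "good n n' \<delta> \<longleftrightarrow> boundary_op n \<delta> \<and>
     (\<forall>u\<in>Cpm n. (\<forall>i<n'. u i = 0) \<and> \<delta> (u, 0) = 0 \<longrightarrow> u = 0) \<and>
     (\<forall>w\<in>Cpm n. (\<forall>i<n'. w i = 0) \<and> \<delta> (0, w) = 0 \<longrightarrow> w = 0)"

definition dmp :: "('a::zero cvec \<Rightarrow> 'a cvec) \<Rightarrow> (nat \<Rightarrow> 'a) \<Rightarrow> (nat \<Rightarrow> 'a)" where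
  "dmp \<delta> u = snd (\<delta> (u, 0))"

definition dpm :: "('a::zero cvec \<Rightarrow> 'a cvec) \<Rightarrow> (nat \<Rightarrow> 'a) \<Rightarrow> (nat \<Rightarrow> 'a)" where
  "dpm \<delta> w = fst (\<delta> (0, w))"

definition Vsp :: "nat \<Rightarrow> 'a::zero cvec set" where
  "Vsp n' = Cpm n' \<times> Cpm n'"

definition Vgt :: "nat \<Rightarrow> nat \<Rightarrow> 'a::zero cvec set" where
  "Vgt n n' = {x \<in> Ctot n. \<forall>i<n'. fst x i = 0 \<and> snd x i = 0}"

definition Wproj :: "nat \<Rightarrow> 'a::zero cvec \<Rightarrow> 'a cvec" where
  "Wproj n' x = ((\<lambda>i. if i < n' then fst x i else 0), (\<lambda>i. if i < n' then snd x i else 0))"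

definition Sgt :: "nat \<Rightarrow> nat \<Rightarrow> ('a::zero cvec \<Rightarrow> 'a cvec) \<Rightarrow> 'a cvec set" where
  "Sgt n n' \<delta> = Wproj n' ` \<delta> ` Vgt n n'"

text \<open>\<open>\<pi>\<close> realises the quotient \<open>\<V>' = \<V> / S^>\<close>: a surjective linear map from \<open>\<V>\<close>
  onto the vector space \<open>'q\<close> (scalar multiplication \<open>scaleQ\<close>) with kernel \<open>S^>\<close>.\<close>
definition quotient_map ::
  "nat \<Rightarrow> nat \<Rightarrow> ('a::field cvec \<Rightarrow> 'a cvec) \<Rightarrow> ('a \<Rightarrow> 'q::ab_group_add \<Rightarrow> 'q) \<Rightarrow> ('a cvec \<Rightarrow> 'q) \<Rightarrow> bool" where
  "quotient_map n n' \<delta> scaleQ \<pi> \<longleftrightarrow>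
     vector_space scaleQ \<and> linear_on scaleC scaleQ (Vsp n') \<pi> \<and> \<pi> ` Vsp n' = UNIV \<and>
     (\<forall>x\<in>Vsp n'. \<pi> x = 0 \<longleftrightarrow> x \<in> Sgt n n' \<delta>)"

definition rep :: "nat \<Rightarrow> ('a::zero cvec \<Rightarrow> 'q) \<Rightarrow> 'q \<Rightarrow> 'a cvec" where
  "rep n' \<pi> q = (SOME x. x \<in> Vsp n' \<and> \<pi> x = q)"

definition phi :: "nat \<Rightarrow> ('a::zero cvec \<Rightarrow> 'q) \<Rightarrow> 'a cvec \<Rightarrow> 'q" where
  "phi n' \<pi> h = \<pi> (Wproj n' h)"

definition dq :: "nat \<Rightarrow> ('a::zero cvec \<Rightarrow> 'a cvec) \<Rightarrow> ('a cvec \<Rightarrow> 'q) \<Rightarrow> 'q \<Rightarrow> 'q" where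
  "dq n' \<delta> \<pi> q = phi n' \<pi> (\<delta> (rep n' \<pi> q))"

definition Pq :: "nat \<Rightarrow> ('a::{zero,uminus} cvec \<Rightarrow> 'q) \<Rightarrow> 'q \<Rightarrow> 'q" where
  "Pq n' \<pi> q = phi n' \<pi> (Pop (rep n' \<pi> q))"

definition Vq_plus :: "nat \<Rightarrow> ('a::{zero,uminus} cvec \<Rightarrow> 'q::uminus) \<Rightarrow> 'q set" where
  "Vq_plus n' \<pi> = {q. Pq n' \<pi> q = q}"

definition Vq_minus :: "nat \<Rightarrow> ('a::{zero,uminus} cvec \<Rightarrow> 'q::uminus) \<Rightarrow> 'q set" where
  "Vq_minus n' \<pi> = {q. Pq n' \<pi> q = - q}"

definition proj_plus :: "('a::field \<Rightarrow> 'q \<Rightarrow> 'q) \<Rightarrow> nat \<Rightarrow> ('a cvec \<Rightarrow> 'q::ab_group_add) \<Rightarrow> 'q \<Rightarrow> 'q" where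
  "proj_plus scaleQ n' \<pi> q = scaleQ (inverse 2) (q + Pq n' \<pi> q)"

definition proj_minus :: "('a::field \<Rightarrow> 'q \<Rightarrow> 'q) \<Rightarrow> nat \<Rightarrow> ('a cvec \<Rightarrow> 'q::ab_group_add) \<Rightarrow> 'q \<Rightarrow> 'q" where
  "proj_minus scaleQ n' \<pi> q = scaleQ (inverse 2) (q - Pq n' \<pi> q)"

definition dq_mp :: "('a::field \<Rightarrow> 'q \<Rightarrow> 'q) \<Rightarrow> nat \<Rightarrow> ('a cvec \<Rightarrow> 'a cvec) \<Rightarrow> ('a cvec \<Rightarrow> 'q::ab_group_add) \<Rightarrow> 'q \<Rightarrow> 'q" where
  "dq_mp scaleQ n' \<delta> \<pi> q = proj_minus scaleQ n' \<pi> (dq n' \<delta> \<pi> q)"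

definition dq_pm :: "('a::field \<Rightarrow> 'q \<Rightarrow> 'q) \<Rightarrow> nat \<Rightarrow> ('a cvec \<Rightarrow> 'a cvec) \<Rightarrow> ('a cvec \<Rightarrow> 'q::ab_group_add) \<Rightarrow> 'q \<Rightarrow> 'q" where
  "dq_pm scaleQ n' \<delta> \<pi> q = proj_plus scaleQ n' \<pi> (dq n' \<delta> \<pi> q)"

end

theory Submission
  imports Defs "HOL-Library.FuncSet"
begin

text \<open>
  Let \<open>H\<close> be the vectors of \<open>C_\<pm>\<close> supported on the last \<open>n - n'\<close> coordinates.
  Anticommutation with \<open>P\<close> (and \<open>2 \<noteq> 0\<close>) gives the block form
  \<open>\<delta> (u, w) = (\<delta>_{+-} w, \<delta>_{-+} u)\<close>, so \<open>S^> = W \<delta>_{+-} H \<times> W \<delta>_{-+} H\<close> and \<open>\<V>'\<close> is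
  the direct sum of the images of the two halves of \<open>\<V>\<close>, which are the eigenspaces \<open>\<V>'_\<pm>\<close>.
  Goodness makes \<open>W \<circ> \<delta>_{+-}\<close> injective on \<open>H\<close>: if \<open>W \<delta>_{+-} u = 0\<close> then
  \<open>\<delta>_{+-} u \<in> H\<close> is killed by \<open>\<delta>_{-+}\<close>, hence vanishes, hence \<open>u = 0\<close>. Thus each
  \<open>\<V>'_\<pm>\<close> has dimension \<open>n' - (n - n')\<close>. Truncation maps \<open>ker \<delta>_{-+}\<close> onto (representatives
  of) \<open>ker \<delta>'_{-+}\<close> with kernel \<open>\<delta>_{+-} H\<close>, and \<open>y \<mapsto> \<phi> (W y)\<close> maps \<open>im \<delta>_{-+}\<close> onto
  \<open>im \<delta>'_{-+}\<close> with kernel \<open>\<delta>_{-+} H\<close>; both kernels are copies of \<open>H\<close>. Over the finite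
  field every dimension is read off from a cardinality, so each step is a count of the fibres of
  an additive map.
\<close>

lemma card_eq_card_image_mult_card_kernel:
  fixes f :: "'b::ab_group_add \<Rightarrow> 'c::ab_group_add"
  assumes "finite V"
    and add_closed: "\<And>x y. x \<in> V \<Longrightarrow> y \<in> V \<Longrightarrow> x + y \<in> V"
    and diff_closed: "\<And>x y. x \<in> V \<Longrightarrow> y \<in> V \<Longrightarrow> x - y \<in> V"
    and additive: "\<And>x y. x \<in> V \<Longrightarrow> y \<in> V \<Longrightarrow> f (x + y) = f x + f y"
  shows "card V = card (f ` V) * card {x \<in> V. f x = 0}"
proof -
  let ?K = "{x \<in> V. f x = 0}"
  have fibre: "card {x \<in> V. f x = y} = card ?K" if "y \<in> f ` V" for y
  proof -
    obtain x0 where x0: "x0 \<in> V" "f x0 = y" using \<open>y \<in> f ` V\<close> by blast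
    have f_diff: "f (x - x0) = f x - f x0" if "x \<in> V" for x
      using additive[OF diff_closed[OF that x0(1)] x0(1)] by (simp add: algebra_simps)
    have "bij_betw (\<lambda>x. x - x0) {x \<in> V. f x = y} ?K"
      by (rule bij_betwI[where g = "\<lambda>k. k + x0"])
        (use x0 f_diff diff_closed add_closed additive in auto)
    then show ?thesis by (rule bij_betw_same_card)
  qed
  have "card V = card (\<Union>y \<in> f ` V. {x \<in> V. f x = y})"
    by (rule arg_cong[of _ _ card]) auto
  also have "\<dots> = (\<Sum>y \<in> f ` V. card {x \<in> V. f x = y})"
    by (rule card_UN_disjoint) (use \<open>finite V\<close> in auto)
  also have "\<dots> = card (f ` V) * card ?K" using fibre by simp
  finally show ?thesis .
qed

lemma card_functions_supported_on:
  fixes I :: "'b set"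
  assumes "finite I" and "finite (UNIV :: 'a set)"
  shows "card {u :: 'b \<Rightarrow> 'a::zero. \<forall>i. i \<notin> I \<longrightarrow> u i = 0} = card (UNIV :: 'a set) ^ card I"
proof -
  have "bij_betw (\<lambda>u. restrict u I) {u :: 'b \<Rightarrow> 'a. \<forall>i. i \<notin> I \<longrightarrow> u i = 0} (I \<rightarrow>\<^sub>E UNIV)"
    by (rule bij_betwI[where g = "\<lambda>c i. if i \<in> I then c i else 0"])
      (auto simp: fun_eq_iff PiE_def extensional_def)
  then show ?thesis using assms by (simp add: bij_betw_same_card card_PiE)
qed

lemma two_neq_zero_if_odd_card:
  assumes "odd (card (UNIV :: 'a::field set))"
  shows "(2 :: 'a) \<noteq> 0"
proof
  assume two: "(2 :: 'a) = 0"
  have "finite (UNIV :: 'a set)" using assms card.infinite by fastforce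
  \<comment> \<open>In characteristic two, \<open>x \<mapsto> x\<^sup>2 + x\<close> is additive with the two-element kernel \<open>{0, -1}\<close>.\<close>
  let ?f = "\<lambda>x :: 'a. x * x + x"
  have "?f (x + y) = ?f x + ?f y" for x y
  proof -
    have "?f (x + y) = ?f x + ?f y + 2 * x * y" by (simp add: algebra_simps)
    then show ?thesis using two by simp
  qed
  then have "card (UNIV :: 'a set) = card (range ?f) * card {x \<in> UNIV. ?f x = 0}"
    using \<open>finite UNIV\<close> by (intro card_eq_card_image_mult_card_kernel) auto
  moreover have "{x \<in> UNIV. ?f x = 0} = {0, -1}"
  proof -
    have "?f x = x * (x + 1)" for x by (simp add: algebra_simps)
    then show ?thesis by (auto simp: eq_neg_iff_add_eq_0)
  qed
  ultimately show False using assms by simp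
qed

lemma linear_on_zero:
  fixes f :: "'a::monoid_add \<Rightarrow> 'b::group_add"
  assumes "linear_on s1 s2 V f" and "0 \<in> V"
  shows "f 0 = 0"
proof -
  have "f (0 + 0) = f 0 + f 0" using assms unfolding linear_on_def by blast
  then show ?thesis by (metis add.right_neutral add_left_cancel)
qed

lemma linear_on_additive:
  fixes f :: "'a::ab_group_add \<Rightarrow> 'b::ab_group_add"
  assumes "linear_on s1 s2 V f" and "x \<in> V" and "y \<in> V"
  shows "f (x + y) = f x + f y" and "x - y \<in> V \<Longrightarrow> f (x - y) = f x - f y"
proof -
  show "f (x + y) = f x + f y" using assms unfolding linear_on_def by blast
  assume "x - y \<in> V"
  then have "f (x - y + y) = f (x - y) + f y" using assms unfolding linear_on_def by blast
  then show "f (x - y) = f x - f y" by (simp add: algebra_simps)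
qed

lemma subspace_image_linear_on:
  assumes "vector_space s1" and "vector_space s2" and V: "module.subspace s1 V"
    and f: "linear_on s1 s2 V f"
  shows "module.subspace s2 (f ` V)"
proof -
  interpret V1: vector_space s1 by fact
  interpret V2: vector_space s2 by fact
  show ?thesis unfolding V2.subspace_def
  proof (intro conjI ballI allI)
    have "0 \<in> V" using V by (rule V1.subspace_0)
    then show "0 \<in> f ` V" using linear_on_zero[OF f] by (metis image_eqI)
  next
    fix a b assume "a \<in> f ` V" "b \<in> f ` V"
    then obtain x y where "x \<in> V" "y \<in> V" "a = f x" "b = f y" by blast
    moreover have "x + y \<in> V" using V \<open>x \<in> V\<close> \<open>y \<in> V\<close> by (rule V1.subspace_add)
    ultimately show "a + b \<in> f ` V" using f unfolding linear_on_def by (metis image_eqI)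
  next
    fix c a assume "a \<in> f ` V"
    then obtain x where "x \<in> V" "a = f x" by blast
    moreover have "s1 c x \<in> V" using V \<open>x \<in> V\<close> by (rule V1.subspace_scale)
    ultimately show "s2 c a \<in> f ` V" using f unfolding linear_on_def by (metis image_eqI)
  qed
qed

lemma subspace_kernel_linear_on:
  assumes "vector_space s1" and "vector_space s2" and V: "module.subspace s1 V"
    and f: "linear_on s1 s2 V f"
  shows "module.subspace s1 {x \<in> V. f x = 0}"
proof -
  interpret V1: vector_space s1 by fact
  interpret V2: vector_space s2 by fact
  have "f 0 = 0" using V1.subspace_0[OF V] by (rule linear_on_zero[OF f])
  then show ?thesis
    using V f unfolding V1.subspace_def linear_on_def by (simp add: V2.scale_zero_right)
qed

lemma linear_on_subset:
  "linear_on s1 s2 W f \<Longrightarrow> V \<subseteq> W \<Longrightarrow> linear_on s1 s2 V f"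
  unfolding linear_on_def by blast

context vector_space
begin

lemma card_subspace:
  assumes "finite (UNIV :: 'a set)" and "subspace S" and "finite S"
  shows "card S = card (UNIV :: 'a set) ^ dim S"
proof -
  obtain B where B: "B \<subseteq> S" "independent B" "S \<subseteq> span B" "card B = dim S"
    by (rule basis_exists)
  have "finite B" using B(1) \<open>finite S\<close> finite_subset by blast
  have "span B = S" using B span_minimal[OF B(1) \<open>subspace S\<close>] by blast
  have independent: "\<And>c. (\<Sum>v\<in>B. scale (c v) v) = 0 \<Longrightarrow> \<forall>v\<in>B. c v = 0"
    using B(2) \<open>finite B\<close> unfolding independent_explicit_finite_subsets by blast
  let ?comb = "\<lambda>c. \<Sum>v\<in>B. scale (c v) v"
  have "bij_betw ?comb (B \<rightarrow>\<^sub>E (UNIV :: 'a set)) (span B)"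
  proof (rule bij_betwI')
    fix c d assume c: "c \<in> B \<rightarrow>\<^sub>E (UNIV :: 'a set)" and d: "d \<in> B \<rightarrow>\<^sub>E (UNIV :: 'a set)"
    show "?comb c = ?comb d \<longleftrightarrow> c = d"
    proof
      assume "?comb c = ?comb d"
      then have "(\<Sum>v\<in>B. scale (c v - d v) v) = 0"
        by (simp add: scale_left_diff_distrib sum_subtractf)
      then have "\<forall>v\<in>B. c v - d v = 0" by (rule independent)
      then show "c = d" using c d by (simp add: PiE_def extensional_def fun_eq_iff) metis
    qed simp
  next
    fix c assume "c \<in> B \<rightarrow>\<^sub>E (UNIV :: 'a set)"
    show "?comb c \<in> span B" by (simp add: span_base span_scale span_sum)
  next
    fix y assume "y \<in> span B"
    then obtain c where c: "y = ?comb c" using span_finite[OF \<open>finite B\<close>] by auto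
    have "y = ?comb (restrict c B)" unfolding c by (rule sum.cong) simp_all
    moreover have "restrict c B \<in> B \<rightarrow>\<^sub>E (UNIV :: 'a set)" by simp
    ultimately show "\<exists>c \<in> B \<rightarrow>\<^sub>E (UNIV :: 'a set). y = ?comb c" by blast
  qed
  then have "card (span B) = card (B \<rightarrow>\<^sub>E (UNIV :: 'a set))" by (simp add: bij_betw_same_card)
  also have "\<dots> = card (UNIV :: 'a set) ^ card B" using \<open>finite B\<close> by (simp add: card_PiE)
  finally show ?thesis by (simp only: \<open>span B = S\<close> B(4))
qed

lemma scale_half_double:
  assumes "(2 :: 'a) \<noteq> 0"
  shows "scale (inverse 2) (x + x) = (x :: 'b)"
proof -
  have "x + x = scale 2 x" by (metis one_add_one scale_left_distrib scale_one)
  then show ?thesis using assms by simp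
qed

lemma double_eq_zero: "(2 :: 'a) \<noteq> 0 \<Longrightarrow> x + x = 0 \<Longrightarrow> (x :: 'b) = 0"
  using scale_half_double[of x] by simp

end

lemma card_UNIV_field_ge_2:
  assumes "finite (UNIV :: 'a::field set)"
  shows "2 \<le> card (UNIV :: 'a set)"
  using card_mono[OF assms, of "{0, 1}"] by simp

lemma exponent_eq_if_power_mult_eq:
  assumes "2 \<le> (N :: nat)" and "N ^ a * N ^ m = N ^ b"
  shows "int a = int b - int m"
proof -
  have "N ^ (a + m) = N ^ b" using assms(2) by (simp add: power_add)
  then show ?thesis using assms(1) by (simp add: power_inject_exp)
qed

lemma dim_eq_diff_if_card_mult_eq:
  fixes s1 :: "'a::field \<Rightarrow> 'b::ab_group_add \<Rightarrow> 'b" and s2 :: "'a \<Rightarrow> 'c::ab_group_add \<Rightarrow> 'c"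
  assumes "vector_space s1" and "vector_space s2" and "finite (UNIV :: 'a set)"
    and "module.subspace s1 S" and "finite S" and "module.subspace s2 T" and "finite T"
    and "card S * card (UNIV :: 'a set) ^ m = card T"
  shows "int (vector_space.dim s1 S) = int (vector_space.dim s2 T) - int m"
proof -
  interpret V1: vector_space s1 by fact
  interpret V2: vector_space s2 by fact
  show ?thesis
    using assms(8) V1.card_subspace[OF assms(3-5)] V2.card_subspace[OF assms(3,6,7)]
    by (intro exponent_eq_if_power_mult_eq[OF card_UNIV_field_ge_2[OF assms(3)]]) simp
qed

lemma vector_space_scaleF: "vector_space (scaleF :: 'a::field \<Rightarrow> (nat \<Rightarrow> 'a) \<Rightarrow> nat \<Rightarrow> 'a)"
  by unfold_locales (simp_all add: scaleF_def fun_eq_iff algebra_simps)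

interpretation coord: vector_space "scaleF :: 'a::field \<Rightarrow> (nat \<Rightarrow> 'a) \<Rightarrow> nat \<Rightarrow> 'a"
  by (rule vector_space_scaleF)

lemma Cpm_closed:
  fixes u v :: "nat \<Rightarrow> 'a::ab_group_add"
  shows "0 \<in> Cpm n"
    and "u \<in> Cpm n \<Longrightarrow> v \<in> Cpm n \<Longrightarrow> u + v \<in> Cpm n"
    and "u \<in> Cpm n \<Longrightarrow> v \<in> Cpm n \<Longrightarrow> u - v \<in> Cpm n"
    and "u \<in> Cpm n \<Longrightarrow> - u \<in> Cpm n"
  by (simp_all add: Cpm_def)

lemma scaleF_minus_one: "scaleF (-1) u = - (u :: nat \<Rightarrow> 'a::ring_1)"
  by (simp add: scaleF_def fun_eq_iff)

lemma scaleF_zero: "scaleF c (0 :: nat \<Rightarrow> 'a::mult_zero) = 0"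
  by (simp add: scaleF_def fun_eq_iff)

lemma scaleF_Cpm: "u \<in> Cpm n \<Longrightarrow> scaleF (c :: 'a::field) u \<in> Cpm n"
  by (simp add: Cpm_def scaleF_def)

lemma Cpm_mono: "k \<le> n \<Longrightarrow> u \<in> Cpm k \<Longrightarrow> u \<in> Cpm n"
  by (simp add: Cpm_def)

lemma coord_subspace_Cpm: "coord.subspace (Cpm n :: (nat \<Rightarrow> 'a::field) set)"
  unfolding coord.subspace_def by (simp add: Cpm_closed scaleF_Cpm)

lemma card_Cpm:
  assumes "finite (UNIV :: 'a set)"
  shows "card (Cpm k :: (nat \<Rightarrow> 'a::zero) set) = card (UNIV :: 'a set) ^ k"
proof -
  have "Cpm k = {u :: nat \<Rightarrow> 'a. \<forall>i. i \<notin> {0..<k} \<longrightarrow> u i = 0}" by (auto simp: Cpm_def)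
  then show ?thesis using card_functions_supported_on[OF _ assms, of "{0..<k}"] by simp
qed

lemma finite_Cpm:
  assumes "finite (UNIV :: 'a set)"
  shows "finite (Cpm k :: (nat \<Rightarrow> 'a::zero) set)"
  using card_Cpm[OF assms, of k] assms by (intro card_ge_0_finite) (simp add: finite_UNIV_card_ge_0)

definition trunc :: "nat \<Rightarrow> (nat \<Rightarrow> 'a::zero) \<Rightarrow> nat \<Rightarrow> 'a" where
  "trunc k u = (\<lambda>i. if i < k then u i else 0)"

lemma trunc_Cpm [simp]: "trunc k u \<in> Cpm k"
  by (simp add: Cpm_def trunc_def)

lemma trunc_id: "u \<in> Cpm k \<Longrightarrow> trunc k u = u"
  by (auto simp: Cpm_def trunc_def fun_eq_iff)

lemma trunc_linear:
  fixes u v :: "nat \<Rightarrow> 'a::field"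
  shows "trunc k 0 = 0" and "trunc k (u + v) = trunc k u + trunc k v"
    and "trunc k (u - v) = trunc k u - trunc k v" and "trunc k (- u) = - trunc k u"
    and "trunc k (scaleF c u) = scaleF c (trunc k u)"
  by (auto simp: trunc_def scaleF_def fun_eq_iff)

lemma Wproj_eq_trunc: "Wproj k x = (trunc k (fst x), trunc k (snd x))"
  by (simp add: Wproj_def trunc_def)

definition tail_space :: "nat \<Rightarrow> nat \<Rightarrow> (nat \<Rightarrow> 'a::zero) set" where
  "tail_space n k = {u \<in> Cpm n. \<forall>i<k. u i = 0}"

lemma tail_space_iff_trunc: "u \<in> tail_space n k \<longleftrightarrow> u \<in> Cpm n \<and> trunc k u = 0"
  by (auto simp: tail_space_def trunc_def fun_eq_iff)

lemma tail_space_closed: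
  fixes u v :: "nat \<Rightarrow> 'a::ab_group_add"
  shows "0 \<in> tail_space n k"
    and "u \<in> tail_space n k \<Longrightarrow> v \<in> tail_space n k \<Longrightarrow> u - v \<in> tail_space n k"
    and "u \<in> tail_space n k \<Longrightarrow> - u \<in> tail_space n k"
  by (simp_all add: tail_space_def Cpm_def)

lemma tail_space_Cpm: "u \<in> tail_space n k \<Longrightarrow> u \<in> Cpm n"
  by (simp add: tail_space_def)

lemma diff_trunc_tail_space:
  "u \<in> Cpm n \<Longrightarrow> u - trunc k u \<in> tail_space n (k :: nat)"
  for u :: "nat \<Rightarrow> 'a::ab_group_add"
  by (simp add: tail_space_def Cpm_def trunc_def)

lemma card_tail_space:
  assumes "finite (UNIV :: 'a set)"
  shows "card (tail_space n k :: (nat \<Rightarrow> 'a::zero) set) = card (UNIV :: 'a set) ^ (n - k)"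
proof -
  have "tail_space n k = {u :: nat \<Rightarrow> 'a. \<forall>i. i \<notin> {k..<n} \<longrightarrow> u i = 0}"
    by (auto simp: tail_space_def Cpm_def)
  then show ?thesis using card_functions_supported_on[OF _ assms, of "{k..<n}"] by simp
qed

text \<open>\<open>A\<close> and \<open>B\<close> play the roles of \<open>\<delta>_{-+}\<close> and \<open>\<delta>_{+-}\<close>; the last two hypotheses are the
  goodness of \<open>\<delta>\<close>.\<close>

locale chain_pair =
  fixes n n' :: nat and A B :: "(nat \<Rightarrow> 'a::field) \<Rightarrow> nat \<Rightarrow> 'a"
  assumes le: "n' \<le> n"
    and A_Cpm: "u \<in> Cpm n \<Longrightarrow> A u \<in> Cpm n"
    and B_Cpm: "u \<in> Cpm n \<Longrightarrow> B u \<in> Cpm n"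
    and A_linear: "linear_on scaleF scaleF (Cpm n) A"
    and B_linear: "linear_on scaleF scaleF (Cpm n) B"
    and B_A: "u \<in> Cpm n \<Longrightarrow> B (A u) = 0"
    and A_B: "u \<in> Cpm n \<Longrightarrow> A (B u) = 0"
    and A_tail_inj: "u \<in> tail_space n n' \<Longrightarrow> A u = 0 \<Longrightarrow> u = 0"
    and B_tail_inj: "u \<in> tail_space n n' \<Longrightarrow> B u = 0 \<Longrightarrow> u = 0"
begin

lemma Cpm_le: "u \<in> Cpm n' \<Longrightarrow> u \<in> Cpm n"
  using le by (rule Cpm_mono)

lemma A_additive:
  assumes "u \<in> Cpm n" and "v \<in> Cpm n"
  shows "A (u + v) = A u + A v" and "A (u - v) = A u - A v"
  using linear_on_additive[OF A_linear assms] Cpm_closed(3)[OF assms] by simp_all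

lemma A_scale: "u \<in> Cpm n \<Longrightarrow> A (scaleF c u) = scaleF c (A u)"
  using A_linear unfolding linear_on_def by blast

lemma A_zero: "A 0 = 0"
  using A_linear Cpm_closed(1) by (rule linear_on_zero)

lemma A_minus: "u \<in> Cpm n \<Longrightarrow> A (- u) = - A u"
  using A_additive(2)[of 0 u] by (simp add: Cpm_closed A_zero)

lemma A_eq_if_trunc_eq:
  assumes "u \<in> Cpm n" and "v \<in> Cpm n" and "trunc n' (A u) = trunc n' (A v)"
  shows "A u = A v"
proof -
  have "A u - A v \<in> tail_space n n'"
    using assms by (simp add: tail_space_iff_trunc trunc_linear Cpm_closed A_Cpm)
  moreover have "B (A u - A v) = 0"
    using assms by (simp add: A_additive(2)[symmetric] B_A Cpm_closed)
  ultimately show ?thesis using B_tail_inj by fastforce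
qed

lemma eq_B_if_trunc_eq:
  assumes "u \<in> Cpm n" and "A u = 0" and "v \<in> Cpm n" and "trunc n' u = trunc n' (B v)"
  shows "u = B v"
proof -
  have "u - B v \<in> tail_space n n'"
    using assms by (simp add: tail_space_iff_trunc trunc_linear Cpm_closed B_Cpm)
  moreover have "A (u - B v) = 0"
    using assms by (simp add: A_additive(2) A_B B_Cpm)
  ultimately show ?thesis using A_tail_inj by fastforce
qed

lemma trunc_A_trunc_B_tail:
  assumes "x \<in> trunc n' ` B ` tail_space n n'"
  shows "trunc n' (A x) \<in> trunc n' ` A ` tail_space n n'"
proof -
  obtain v where v: "v \<in> tail_space n n'" "x = trunc n' (B v)" using assms by blast
  \<comment> \<open>Since \<open>A (B v) = 0\<close>, only the tail \<open>y\<close> of \<open>B v\<close> contributes.\<close>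
  define y where "y = B v - trunc n' (B v)"
  have Bv: "B v \<in> Cpm n" using v(1) tail_space_Cpm B_Cpm by blast
  have y: "y \<in> tail_space n n'" unfolding y_def using Bv by (rule diff_trunc_tail_space)
  have "A x = A (B v - y)" using v(2) by (simp add: y_def)
  also have "\<dots> = A (- y)"
    using Bv tail_space_Cpm[OF y] A_B[OF tail_space_Cpm[OF v(1)]]
    by (simp add: A_additive(2) A_minus)
  finally show ?thesis using tail_space_closed(3)[OF y] by blast
qed

lemma A_inj_on_tail: "inj_on A (tail_space n n')"
proof (rule inj_onI)
  fix u v assume u: "u \<in> tail_space n n'" and v: "v \<in> tail_space n n'" and "A u = A v"
  then have "A (u - v) = 0"
    using A_additive(2)[OF tail_space_Cpm[OF u] tail_space_Cpm[OF v]] by simp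
  then show "u = v" using A_tail_inj[OF tail_space_closed(2)[OF u v]] by simp
qed

lemma zero_in_trunc_A_tail: "0 \<in> trunc n' ` A ` tail_space n n'"
  using tail_space_closed(1) by (intro image_eqI) (auto simp: A_zero trunc_linear(1))

lemma card_A_tail:
  assumes "finite (UNIV :: 'a set)"
  shows "card (A ` tail_space n n') = card (UNIV :: 'a set) ^ (n - n')"
  using card_image[OF A_inj_on_tail] card_tail_space[OF assms] by simp

end

sublocale chain_pair \<subseteq> swap: chain_pair n n' B A
  by unfold_locales (fact le B_Cpm A_Cpm B_linear A_linear A_B B_A B_tail_inj A_tail_inj)+

context chain_pair
begin

lemma trunc_B_inj_on_tail: "inj_on (\<lambda>u. trunc n' (B u)) (tail_space n n')"
proof (rule inj_onI)
  fix u v assume u: "u \<in> tail_space n n'" and v: "v \<in> tail_space n n'"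
    and "trunc n' (B u) = trunc n' (B v)"
  then have "B u = B v" using swap.A_eq_if_trunc_eq tail_space_Cpm by blast
  then show "u = v" using swap.A_inj_on_tail u v by (simp add: inj_on_def)
qed

lemma card_trunc_B_tail:
  assumes "finite (UNIV :: 'a set)"
  shows "card (trunc n' ` B ` tail_space n n') = card (UNIV :: 'a set) ^ (n - n')"
  using card_image[OF trunc_B_inj_on_tail] card_tail_space[OF assms] by (simp add: image_image)

end

text \<open>\<open>q1\<close> and \<open>q2\<close> are the quotient map \<open>\<V> \<rightarrow> \<V>'\<close> restricted to the two halves of \<open>\<V>\<close>,
  and \<open>q_kernel\<close> says that its kernel is \<open>S^>\<close>. Then \<open>reduced_A\<close> is \<open>\<delta>'_{-+}\<close> on representatives.\<close>

locale reduced_quotient = chain_pair n n' A B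
  for n n' :: nat and A B :: "(nat \<Rightarrow> 'a::field) \<Rightarrow> nat \<Rightarrow> 'a" +
  fixes scaleQ :: "'a \<Rightarrow> 'q::ab_group_add \<Rightarrow> 'q" and q1 q2 :: "(nat \<Rightarrow> 'a) \<Rightarrow> 'q"
  assumes vector_space_Q: "vector_space scaleQ"
    and q1_linear: "linear_on scaleF scaleQ (Cpm n') q1"
    and q2_linear: "linear_on scaleF scaleQ (Cpm n') q2"
    and q_kernel: "u \<in> Cpm n' \<Longrightarrow> w \<in> Cpm n' \<Longrightarrow>
      q1 u + q2 w = 0 \<longleftrightarrow> u \<in> trunc n' ` B ` tail_space n n' \<and> w \<in> trunc n' ` A ` tail_space n n'"
begin

sublocale Q: vector_space scaleQ by (rule vector_space_Q)

definition reduced_A :: "(nat \<Rightarrow> 'a) \<Rightarrow> 'q" where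
  "reduced_A u = q2 (trunc n' (A u))"

lemma q1_additive:
  assumes "u \<in> Cpm n'" and "v \<in> Cpm n'"
  shows "q1 (u + v) = q1 u + q1 v" and "q1 (u - v) = q1 u - q1 v"
  using linear_on_additive[OF q1_linear assms] Cpm_closed(3)[OF assms] by simp_all

lemma q2_additive:
  assumes "u \<in> Cpm n'" and "v \<in> Cpm n'"
  shows "q2 (u + v) = q2 u + q2 v" and "q2 (u - v) = q2 u - q2 v"
  using linear_on_additive[OF q2_linear assms] Cpm_closed(3)[OF assms] by simp_all

lemma q2_scale: "u \<in> Cpm n' \<Longrightarrow> q2 (scaleF c u) = scaleQ c (q2 u)"
  using q2_linear unfolding linear_on_def by blast

lemma q1_zero: "q1 0 = 0"
  using q1_linear Cpm_closed(1) by (rule linear_on_zero)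

lemma q2_zero: "q2 0 = 0"
  using q2_linear Cpm_closed(1) by (rule linear_on_zero)

lemma q2_minus: "w \<in> Cpm n' \<Longrightarrow> q2 (- w) = - q2 w"
  using q2_additive(2)[OF Cpm_closed(1)] by (simp add: q2_zero)

lemma q1_kernel: "u \<in> Cpm n' \<Longrightarrow> q1 u = 0 \<longleftrightarrow> u \<in> trunc n' ` B ` tail_space n n'"
  using q_kernel[of u 0] q2_zero zero_in_trunc_A_tail by (simp add: Cpm_closed)

lemma q2_kernel: "w \<in> Cpm n' \<Longrightarrow> q2 w = 0 \<longleftrightarrow> w \<in> trunc n' ` A ` tail_space n n'"
  using q_kernel[of 0 w] q1_zero swap.zero_in_trunc_A_tail by (simp add: Cpm_closed)

lemma linear_on_reduced_A: "linear_on scaleF scaleQ (Cpm n') reduced_A"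
proof -
  have "reduced_A (u + v) = reduced_A u + reduced_A v" if "u \<in> Cpm n'" "v \<in> Cpm n'" for u v
    using that by (simp add: reduced_A_def A_additive(1) Cpm_le trunc_linear q2_additive)
  moreover have "reduced_A (scaleF c u) = scaleQ c (reduced_A u)" if "u \<in> Cpm n'" for c u
    using that by (simp add: reduced_A_def A_scale Cpm_le trunc_linear q2_scale)
  ultimately show ?thesis unfolding linear_on_def by blast
qed

lemma q1_q2_sum_eq_imp:
  assumes "u \<in> Cpm n'" "w \<in> Cpm n'" "u' \<in> Cpm n'" "w' \<in> Cpm n'"
    and "q1 u + q2 w = q1 u' + q2 w'"
  shows "q1 u = q1 u'" and "q2 w = q2 w'"
proof -
  have "q1 (u - u') + q2 (w - w') = 0"
    using assms by (simp add: q1_additive q2_additive algebra_simps)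
  then have "u - u' \<in> trunc n' ` B ` tail_space n n'"
    and "w - w' \<in> trunc n' ` A ` tail_space n n'"
    using q_kernel[OF Cpm_closed(3)[OF assms(1,3)] Cpm_closed(3)[OF assms(2,4)]] by blast+
  then have "q1 (u - u') = 0" and "q2 (w - w') = 0"
    using q1_kernel[OF Cpm_closed(3)[OF assms(1,3)]] q2_kernel[OF Cpm_closed(3)[OF assms(2,4)]]
    by blast+
  then show "q1 u = q1 u'" and "q2 w = q2 w'"
    using assms(1-4) by (simp_all add: q1_additive q2_additive)
qed

lemma reduced_A_eq_if_q1_eq:
  assumes "r \<in> Cpm n'" and "u \<in> Cpm n'" and "q1 r = q1 u"
  shows "reduced_A r = reduced_A u"
proof -
  have "r - u \<in> trunc n' ` B ` tail_space n n'"
    using assms q1_kernel[OF Cpm_closed(3)] by (simp add: q1_additive)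
  then have "reduced_A (r - u) = 0"
    unfolding reduced_A_def using q2_kernel[OF trunc_Cpm] trunc_A_trunc_B_tail by blast
  then show ?thesis
    using linear_on_additive(2)[OF linear_on_reduced_A assms(1,2) Cpm_closed(3)[OF assms(1,2)]]
    by simp
qed

lemma q1_trunc_image_kernel_A:
  "(\<lambda>u. q1 (trunc n' u)) ` {u \<in> Cpm n. A u = 0} = q1 ` {u \<in> Cpm n'. reduced_A u = 0}"
proof (intro equalityI subsetI)
  fix q assume "q \<in> (\<lambda>u. q1 (trunc n' u)) ` {u \<in> Cpm n. A u = 0}"
  then obtain u where u: "u \<in> Cpm n" "A u = 0" "q = q1 (trunc n' u)" by blast
  define v where "v = u - trunc n' u"
  have v: "v \<in> tail_space n n'" unfolding v_def using u(1) by (rule diff_trunc_tail_space)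
  have "A (trunc n' u) = A (u - v)" by (simp add: v_def)
  also have "\<dots> = A (- v)"
    using u tail_space_Cpm[OF v] by (simp add: A_additive(2) A_minus)
  finally have "reduced_A (trunc n' u) = 0"
    using q2_kernel[OF trunc_Cpm] tail_space_closed(3)[OF v] by (auto simp: reduced_A_def)
  then show "q \<in> q1 ` {u \<in> Cpm n'. reduced_A u = 0}" using u(3) by auto
next
  fix q assume "q \<in> q1 ` {u \<in> Cpm n'. reduced_A u = 0}"
  then obtain u where u: "u \<in> Cpm n'" "reduced_A u = 0" "q = q1 u" by blast
  then obtain v where v: "v \<in> tail_space n n'" "trunc n' (A u) = trunc n' (A v)"
    using q2_kernel[OF trunc_Cpm] by (auto simp: reduced_A_def)
  have "A u = A v" using A_eq_if_trunc_eq Cpm_le[OF u(1)] tail_space_Cpm[OF v(1)] v(2) .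
  then have "A (u - v) = 0"
    using Cpm_le[OF u(1)] tail_space_Cpm[OF v(1)] by (simp add: A_additive(2))
  moreover have "trunc n' (u - v) = u"
    using trunc_id[OF u(1)] v(1) by (simp add: trunc_linear tail_space_iff_trunc)
  moreover have "u - v \<in> Cpm n"
    using Cpm_le[OF u(1)] tail_space_Cpm[OF v(1)] by (rule Cpm_closed(3))
  ultimately show "q \<in> (\<lambda>u. q1 (trunc n' u)) ` {u \<in> Cpm n. A u = 0}"
    using u(3) by (intro image_eqI[of _ _ "u - v"]) auto
qed

lemma kernel_q1_trunc_on_kernel_A:
  "{u \<in> {u \<in> Cpm n. A u = 0}. q1 (trunc n' u) = 0} = B ` tail_space n n'"
proof (intro equalityI subsetI)
  fix u assume "u \<in> {u \<in> {u \<in> Cpm n. A u = 0}. q1 (trunc n' u) = 0}"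
  then have u: "u \<in> Cpm n" "A u = 0" "q1 (trunc n' u) = 0" by auto
  then obtain v where "v \<in> tail_space n n'" "trunc n' u = trunc n' (B v)"
    using q1_kernel[OF trunc_Cpm] by auto
  then show "u \<in> B ` tail_space n n'" using eq_B_if_trunc_eq[OF u(1,2)] tail_space_Cpm by blast
next
  fix u assume "u \<in> B ` tail_space n n'"
  then obtain v where v: "v \<in> tail_space n n'" "u = B v" by blast
  then have "v \<in> Cpm n" by (simp add: tail_space_Cpm)
  then show "u \<in> {u \<in> {u \<in> Cpm n. A u = 0}. q1 (trunc n' u) = 0}"
    using v q1_kernel[OF trunc_Cpm] A_B B_Cpm by auto
qed

lemma q2_trunc_image_image_A: "(\<lambda>y. q2 (trunc n' y)) ` A ` Cpm n = reduced_A ` Cpm n'"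
proof (intro equalityI subsetI)
  fix q assume "q \<in> (\<lambda>y. q2 (trunc n' y)) ` A ` Cpm n"
  then obtain u where u: "u \<in> Cpm n" "q = q2 (trunc n' (A u))" by blast
  define v where "v = u - trunc n' u"
  have v: "v \<in> tail_space n n'" unfolding v_def using u(1) by (rule diff_trunc_tail_space)
  have "A u = A (trunc n' u + v)" by (simp add: v_def)
  also have "\<dots> = A (trunc n' u) + A v"
    using A_additive(1)[OF Cpm_le[OF trunc_Cpm[of n' u]] tail_space_Cpm[OF v]] .
  finally have "A u = A (trunc n' u) + A v" .
  then have "q = reduced_A (trunc n' u) + q2 (trunc n' (A v))"
    using u(2) by (simp add: reduced_A_def trunc_linear q2_additive)
  also have "q2 (trunc n' (A v)) = 0" using q2_kernel[OF trunc_Cpm] v by blast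
  finally show "q \<in> reduced_A ` Cpm n'" by simp
next
  fix q assume "q \<in> reduced_A ` Cpm n'"
  then show "q \<in> (\<lambda>y. q2 (trunc n' y)) ` A ` Cpm n"
    using Cpm_le by (auto simp: reduced_A_def)
qed

lemma kernel_q2_trunc_on_image_A: "{y \<in> A ` Cpm n. q2 (trunc n' y) = 0} = A ` tail_space n n'"
proof (intro equalityI subsetI)
  fix y assume "y \<in> {y \<in> A ` Cpm n. q2 (trunc n' y) = 0}"
  then obtain u where u: "u \<in> Cpm n" "y = A u" "q2 (trunc n' y) = 0" by blast
  then obtain v where "v \<in> tail_space n n'" "trunc n' (A u) = trunc n' (A v)"
    using q2_kernel[OF trunc_Cpm] by auto
  then show "y \<in> A ` tail_space n n'" using A_eq_if_trunc_eq u tail_space_Cpm by blast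
next
  fix y assume "y \<in> A ` tail_space n n'"
  then obtain v where v: "v \<in> tail_space n n'" "y = A v" by blast
  then have "v \<in> Cpm n" by (simp add: tail_space_Cpm)
  then show "y \<in> {y \<in> A ` Cpm n. q2 (trunc n' y) = 0}"
    using v q2_kernel[OF trunc_Cpm] by auto
qed

lemma subspace_kernel_A: "coord.subspace {u \<in> Cpm n. A u = 0}"
  using vector_space_scaleF vector_space_scaleF coord_subspace_Cpm A_linear
  by (rule subspace_kernel_linear_on)

lemma subspace_image_A: "coord.subspace (A ` Cpm n)"
  using vector_space_scaleF vector_space_scaleF coord_subspace_Cpm A_linear
  by (rule subspace_image_linear_on)

lemma card_q1_image:
  assumes "finite (UNIV :: 'a set)"
  shows "card (q1 ` Cpm n') * card (UNIV :: 'a set) ^ (n - n') = card (UNIV :: 'a set) ^ n'"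
proof -
  have "card (Cpm n' :: (nat \<Rightarrow> 'a) set) = card (q1 ` Cpm n') * card {u \<in> Cpm n'. q1 u = 0}"
    using finite_Cpm[OF assms]
    by (intro card_eq_card_image_mult_card_kernel) (auto simp: Cpm_closed q1_additive)
  also have "{u \<in> Cpm n'. q1 u = 0} = trunc n' ` B ` tail_space n n'"
    using q1_kernel by auto
  finally show ?thesis using card_Cpm[OF assms] card_trunc_B_tail[OF assms] by simp
qed

lemma card_kernel_reduced_A:
  assumes "finite (UNIV :: 'a set)"
  shows "card (q1 ` {u \<in> Cpm n'. reduced_A u = 0}) * card (UNIV :: 'a set) ^ (n - n')
    = card {u \<in> Cpm n. A u = 0}"
proof -
  let ?K = "{u \<in> Cpm n. A u = 0}"
  have "card ?K = card ((\<lambda>u. q1 (trunc n' u)) ` ?K) * card {u \<in> ?K. q1 (trunc n' u) = 0}"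
    using finite_Cpm[OF assms] coord.subspace_add[OF subspace_kernel_A]
      coord.subspace_diff[OF subspace_kernel_A]
    by (intro card_eq_card_image_mult_card_kernel) (auto simp: trunc_linear q1_additive)
  then show ?thesis
    using q1_trunc_image_kernel_A kernel_q1_trunc_on_kernel_A swap.card_A_tail[OF assms] by simp
qed

lemma card_image_reduced_A:
  assumes "finite (UNIV :: 'a set)"
  shows "card (reduced_A ` Cpm n') * card (UNIV :: 'a set) ^ (n - n') = card (A ` Cpm n)"
proof -
  let ?Y = "A ` Cpm n"
  have "card ?Y = card ((\<lambda>y. q2 (trunc n' y)) ` ?Y) * card {y \<in> ?Y. q2 (trunc n' y) = 0}"
    using finite_Cpm[OF assms] coord.subspace_add[OF subspace_image_A]
      coord.subspace_diff[OF subspace_image_A]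
    by (intro card_eq_card_image_mult_card_kernel) (auto simp: trunc_linear q2_additive)
  then show ?thesis using q2_trunc_image_image_A kernel_q2_trunc_on_image_A card_A_tail[OF assms] by simp
qed

lemma dim_q1_image:
  assumes "finite (UNIV :: 'a set)"
  shows "int (Q.dim (q1 ` Cpm n')) = 2 * int n' - int n"
proof -
  have "Q.subspace (q1 ` Cpm n')"
    using vector_space_scaleF vector_space_Q coord_subspace_Cpm q1_linear
    by (rule subspace_image_linear_on)
  then have "card (q1 ` Cpm n') = card (UNIV :: 'a set) ^ Q.dim (q1 ` Cpm n')"
    using Q.card_subspace[OF assms] finite_Cpm[OF assms] by blast
  then have "int (Q.dim (q1 ` Cpm n')) = int n' - int (n - n')"
    using card_q1_image[OF assms]
    by (intro exponent_eq_if_power_mult_eq[OF card_UNIV_field_ge_2[OF assms]]) simp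
  then show ?thesis using le by simp
qed

lemma dim_kernel_reduced_A:
  assumes "finite (UNIV :: 'a set)"
  shows "int (Q.dim (q1 ` {u \<in> Cpm n'. reduced_A u = 0}))
    = int (coord.dim {u \<in> Cpm n. A u = 0}) - (int n - int n')"
proof -
  have "coord.subspace {u \<in> Cpm n'. reduced_A u = 0}"
    using vector_space_scaleF vector_space_Q coord_subspace_Cpm linear_on_reduced_A
    by (rule subspace_kernel_linear_on)
  then have "Q.subspace (q1 ` {u \<in> Cpm n'. reduced_A u = 0})"
    by (rule subspace_image_linear_on[OF vector_space_scaleF vector_space_Q _
          linear_on_subset[OF q1_linear]]) auto
  then have "int (Q.dim (q1 ` {u \<in> Cpm n'. reduced_A u = 0}))
      = int (coord.dim {u \<in> Cpm n. A u = 0}) - int (n - n')"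
    using finite_Cpm[OF assms]
    by (intro dim_eq_diff_if_card_mult_eq[OF vector_space_Q vector_space_scaleF assms _ _
          subspace_kernel_A _ card_kernel_reduced_A[OF assms]]) auto
  then show ?thesis using le by simp
qed

lemma dim_image_reduced_A:
  assumes "finite (UNIV :: 'a set)"
  shows "int (Q.dim (reduced_A ` Cpm n')) = int (coord.dim (A ` Cpm n)) - (int n - int n')"
proof -
  have "Q.subspace (reduced_A ` Cpm n')"
    using vector_space_scaleF vector_space_Q coord_subspace_Cpm linear_on_reduced_A
    by (rule subspace_image_linear_on)
  then have "int (Q.dim (reduced_A ` Cpm n')) = int (coord.dim (A ` Cpm n)) - int (n - n')"
    using finite_Cpm[OF assms]
    by (intro dim_eq_diff_if_card_mult_eq[OF vector_space_Q vector_space_scaleF assms _ _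
          subspace_image_A _ card_image_reduced_A[OF assms]]) auto
  then show ?thesis using le by simp
qed

end

sublocale reduced_quotient \<subseteq> mirror: reduced_quotient n n' B A scaleQ q2 q1
  by unfold_locales (use q2_linear q1_linear q_kernel in \<open>auto simp: add.commute\<close>)


locale boundary_operator =
  fixes n :: nat and \<delta> :: "'a::field cvec \<Rightarrow> 'a cvec"
  assumes two_neq_zero: "(2 :: 'a) \<noteq> 0" and boundary: "boundary_op n \<delta>"
begin

lemma delta_Ctot: "x \<in> Ctot n \<Longrightarrow> \<delta> x \<in> Ctot n"
  using boundary unfolding boundary_op_def by blast

lemma delta_add: "x \<in> Ctot n \<Longrightarrow> y \<in> Ctot n \<Longrightarrow> \<delta> (x + y) = \<delta> x + \<delta> y"
  using boundary unfolding boundary_op_def linear_on_def by blast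

lemma delta_scale: "x \<in> Ctot n \<Longrightarrow> \<delta> (scaleC c x) = scaleC c (\<delta> x)"
  using boundary unfolding boundary_op_def linear_on_def by blast

lemma delta_delta: "x \<in> Ctot n \<Longrightarrow> \<delta> (\<delta> x) = 0"
  using boundary unfolding boundary_op_def by blast

lemma delta_anticommutes_Pop: "x \<in> Ctot n \<Longrightarrow> \<delta> (Pop x) + Pop (\<delta> x) = 0"
  using boundary unfolding boundary_op_def by blast

lemma Ctot_pair: "u \<in> Cpm n \<Longrightarrow> w \<in> Cpm n \<Longrightarrow> (u, w) \<in> Ctot n"
  by (simp add: Ctot_def)

lemma delta_plus_in_minus:
  assumes "u \<in> Cpm n"
  shows "fst (\<delta> (u, 0)) = 0"
proof -
  have "\<delta> (Pop (u, 0)) + Pop (\<delta> (u, 0)) = 0"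
    using delta_anticommutes_Pop[OF Ctot_pair[OF assms Cpm_closed(1)]] .
  then have "fst (\<delta> (u, 0) + Pop (\<delta> (u, 0))) = 0" by (simp add: Pop_def)
  then have "fst (\<delta> (u, 0)) + fst (\<delta> (u, 0)) = 0" by (simp only: fst_add Pop_def fst_conv)
  then show ?thesis using two_neq_zero coord.double_eq_zero by blast
qed

lemma delta_minus_in_plus:
  assumes "w \<in> Cpm n"
  shows "snd (\<delta> (0, w)) = 0"
proof -
  have "Pop (0, w) = scaleC (-1) (0, w)" by (simp add: Pop_def scaleC_def scaleF_def fun_eq_iff)
  moreover have "\<delta> (Pop (0, w)) + Pop (\<delta> (0, w)) = 0"
    using delta_anticommutes_Pop[OF Ctot_pair[OF Cpm_closed(1) assms]] .
  ultimately have "scaleC (-1) (\<delta> (0, w)) + Pop (\<delta> (0, w)) = 0"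
    using delta_scale[OF Ctot_pair[OF Cpm_closed(1) assms]] by simp
  then have "snd (scaleC (-1) (\<delta> (0, w)) + Pop (\<delta> (0, w))) = 0" by simp
  then have "- snd (\<delta> (0, w)) + - snd (\<delta> (0, w)) = 0"
    by (simp only: snd_add scaleC_def Pop_def snd_conv scaleF_minus_one)
  then show ?thesis using two_neq_zero coord.double_eq_zero[of "- snd (\<delta> (0, w))"] by simp
qed

lemma delta_plus: "u \<in> Cpm n \<Longrightarrow> \<delta> (u, 0) = (0, dmp \<delta> u)"
  using delta_plus_in_minus by (simp add: dmp_def prod_eq_iff)

lemma delta_minus: "w \<in> Cpm n \<Longrightarrow> \<delta> (0, w) = (dpm \<delta> w, 0)"
  using delta_minus_in_plus by (simp add: dpm_def prod_eq_iff)

lemma delta_pair: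
  assumes "u \<in> Cpm n" and "w \<in> Cpm n"
  shows "\<delta> (u, w) = (dpm \<delta> w, dmp \<delta> u)"
proof -
  have "\<delta> (u, w) = \<delta> (u, 0) + \<delta> (0, w)"
    using delta_add[OF Ctot_pair[OF assms(1) Cpm_closed(1)] Ctot_pair[OF Cpm_closed(1) assms(2)]]
    by simp
  then show ?thesis using delta_plus[OF assms(1)] delta_minus[OF assms(2)] by simp
qed

lemma dmp_Cpm: "u \<in> Cpm n \<Longrightarrow> dmp \<delta> u \<in> Cpm n"
  using delta_Ctot[OF Ctot_pair[OF _ Cpm_closed(1)], of u] by (simp add: delta_plus Ctot_def)

lemma dpm_Cpm: "w \<in> Cpm n \<Longrightarrow> dpm \<delta> w \<in> Cpm n"
  using delta_Ctot[OF Ctot_pair[OF Cpm_closed(1)], of w] by (simp add: delta_minus Ctot_def)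

lemma linear_on_dmp: "linear_on scaleF scaleF (Cpm n) (dmp \<delta>)"
proof -
  have "dmp \<delta> (u + v) = dmp \<delta> u + dmp \<delta> v" if "u \<in> Cpm n" "v \<in> Cpm n" for u v
    using delta_add[OF Ctot_pair[OF that(1) Cpm_closed(1)] Ctot_pair[OF that(2) Cpm_closed(1)]]
    by (simp add: dmp_def)
  moreover have "dmp \<delta> (scaleF c u) = scaleF c (dmp \<delta> u)" if "u \<in> Cpm n" for c u
    using delta_scale[OF Ctot_pair[OF that Cpm_closed(1)], of c]
    by (simp add: dmp_def scaleC_def scaleF_zero)
  ultimately show ?thesis unfolding linear_on_def by blast
qed

lemma linear_on_dpm: "linear_on scaleF scaleF (Cpm n) (dpm \<delta>)"
proof -
  have "dpm \<delta> (u + v) = dpm \<delta> u + dpm \<delta> v" if "u \<in> Cpm n" "v \<in> Cpm n" for u v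
    using delta_add[OF Ctot_pair[OF Cpm_closed(1) that(1)] Ctot_pair[OF Cpm_closed(1) that(2)]]
    by (simp add: dpm_def)
  moreover have "dpm \<delta> (scaleF c u) = scaleF c (dpm \<delta> u)" if "u \<in> Cpm n" for c u
    using delta_scale[OF Ctot_pair[OF Cpm_closed(1) that], of c]
    by (simp add: dpm_def scaleC_def scaleF_zero)
  ultimately show ?thesis unfolding linear_on_def by blast
qed

lemma dpm_dmp: "u \<in> Cpm n \<Longrightarrow> dpm \<delta> (dmp \<delta> u) = 0"
  using delta_delta[OF Ctot_pair[OF _ Cpm_closed(1)], of u]
  by (simp add: delta_plus delta_minus dmp_Cpm prod_eq_iff)

lemma dmp_dpm: "w \<in> Cpm n \<Longrightarrow> dmp \<delta> (dpm \<delta> w) = 0"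
  using delta_delta[OF Ctot_pair[OF Cpm_closed(1)], of w]
  by (simp add: delta_plus delta_minus dpm_Cpm prod_eq_iff)

lemma chain_pair_if_good:
  assumes "n' \<le> n" and "good n n' \<delta>"
  shows "chain_pair n n' (dmp \<delta>) (dpm \<delta>)"
proof
  fix u :: "nat \<Rightarrow> 'a" assume u: "u \<in> tail_space n n'"
  then have "u \<in> Cpm n" and "\<forall>i<n'. u i = 0" by (simp_all add: tail_space_def)
  then have "\<delta> (u, 0) = 0 \<Longrightarrow> u = 0" and "\<delta> (0, u) = 0 \<Longrightarrow> u = 0"
    using assms(2) unfolding good_def by blast+
  then show "dmp \<delta> u = 0 \<Longrightarrow> u = 0" and "dpm \<delta> u = 0 \<Longrightarrow> u = 0"
    using delta_plus[OF \<open>u \<in> Cpm n\<close>] delta_minus[OF \<open>u \<in> Cpm n\<close>]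
    by (simp_all add: zero_prod_def)
qed (fact assms(1) dmp_Cpm dpm_Cpm linear_on_dmp linear_on_dpm dpm_dmp dmp_dpm)+

end

locale good_reduction = boundary_operator n \<delta>
  for n :: nat and \<delta> :: "'a::field cvec \<Rightarrow> 'a cvec" +
  fixes n' :: nat and scaleQ :: "'a \<Rightarrow> 'q::ab_group_add \<Rightarrow> 'q" and \<pi> :: "'a cvec \<Rightarrow> 'q"
  assumes le: "n' \<le> n" and good: "good n n' \<delta>" and quotient: "quotient_map n n' \<delta> scaleQ \<pi>"
begin

definition pi_plus :: "(nat \<Rightarrow> 'a) \<Rightarrow> 'q" where
  "pi_plus u = \<pi> (u, 0)"

definition pi_minus :: "(nat \<Rightarrow> 'a) \<Rightarrow> 'q" where
  "pi_minus w = \<pi> (0, w)"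

lemma pi_linear: "linear_on scaleC scaleQ (Vsp n') \<pi>"
  using quotient unfolding quotient_map_def by blast

lemma Vsp_pair: "u \<in> Cpm n' \<Longrightarrow> w \<in> Cpm n' \<Longrightarrow> (u, w) \<in> Vsp n'"
  by (simp add: Vsp_def)

lemma pi_pair: "u \<in> Cpm n' \<Longrightarrow> w \<in> Cpm n' \<Longrightarrow> \<pi> (u, w) = pi_plus u + pi_minus w"
  using linear_on_additive(1)[OF pi_linear Vsp_pair[of u 0] Vsp_pair[of 0 w]]
  by (simp add: pi_plus_def pi_minus_def Cpm_closed)

lemma pi_scale: "x \<in> Vsp n' \<Longrightarrow> \<pi> (scaleC c x) = scaleQ c (\<pi> x)"
  using pi_linear unfolding linear_on_def by blast

lemma linear_on_pi_plus: "linear_on scaleF scaleQ (Cpm n') pi_plus"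
proof -
  have "pi_plus (u + v) = pi_plus u + pi_plus v" if "u \<in> Cpm n'" "v \<in> Cpm n'" for u v
    using linear_on_additive(1)[OF pi_linear
        Vsp_pair[OF that(1) Cpm_closed(1)] Vsp_pair[OF that(2) Cpm_closed(1)]]
    by (simp add: pi_plus_def)
  moreover have "pi_plus (scaleF c u) = scaleQ c (pi_plus u)" if "u \<in> Cpm n'" for c u
    using pi_scale[OF Vsp_pair[OF that Cpm_closed(1)], of c]
    by (simp add: pi_plus_def scaleC_def scaleF_zero)
  ultimately show ?thesis unfolding linear_on_def by blast
qed

lemma linear_on_pi_minus: "linear_on scaleF scaleQ (Cpm n') pi_minus"
proof -
  have "pi_minus (u + v) = pi_minus u + pi_minus v" if "u \<in> Cpm n'" "v \<in> Cpm n'" for u v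
    using linear_on_additive(1)[OF pi_linear
        Vsp_pair[OF Cpm_closed(1) that(1)] Vsp_pair[OF Cpm_closed(1) that(2)]]
    by (simp add: pi_minus_def)
  moreover have "pi_minus (scaleF c u) = scaleQ c (pi_minus u)" if "u \<in> Cpm n'" for c u
    using pi_scale[OF Vsp_pair[OF Cpm_closed(1) that], of c]
    by (simp add: pi_minus_def scaleC_def scaleF_zero)
  ultimately show ?thesis unfolding linear_on_def by blast
qed

lemma Sgt_eq:
  "Sgt n n' \<delta> = (trunc n' ` dpm \<delta> ` tail_space n n') \<times> (trunc n' ` dmp \<delta> ` tail_space n n')"
proof -
  have "Vgt n n' = tail_space n n' \<times> tail_space n n'"
    by (auto simp: Vgt_def tail_space_def Ctot_def)
  then have "Sgt n n' \<delta>
      = (\<lambda>(v, w). (trunc n' (dpm \<delta> w), trunc n' (dmp \<delta> v)))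
          ` (tail_space n n' \<times> tail_space n n')"
    unfolding Sgt_def image_image
    by (intro image_cong) (auto simp: delta_pair tail_space_Cpm Wproj_eq_trunc)
  then show ?thesis by auto
qed

sublocale reduced_quotient n n' "dmp \<delta>" "dpm \<delta>" scaleQ pi_plus pi_minus
proof (rule reduced_quotient.intro[OF chain_pair_if_good[OF le good]
      reduced_quotient_axioms.intro])
  show "vector_space scaleQ" using quotient unfolding quotient_map_def by blast
  fix u w :: "nat \<Rightarrow> 'a" assume uw: "u \<in> Cpm n'" "w \<in> Cpm n'"
  have "pi_plus u + pi_minus w = 0 \<longleftrightarrow> (u, w) \<in> Sgt n n' \<delta>"
    using quotient Vsp_pair[OF uw] unfolding quotient_map_def pi_pair[OF uw, symmetric] by blast
  then show "pi_plus u + pi_minus w = 0 \<longleftrightarrow>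
      u \<in> trunc n' ` dpm \<delta> ` tail_space n n' \<and> w \<in> trunc n' ` dmp \<delta> ` tail_space n n'"
    unfolding Sgt_eq by simp
qed (fact linear_on_pi_plus linear_on_pi_minus)+

lemma rep_in_Vsp: "rep n' \<pi> q \<in> Vsp n' \<and> \<pi> (rep n' \<pi> q) = q"
proof -
  have "q \<in> \<pi> ` Vsp n'" using quotient unfolding quotient_map_def by blast
  then have "\<exists>x. x \<in> Vsp n' \<and> \<pi> x = q" by blast
  then show ?thesis unfolding rep_def by (rule someI_ex)
qed

lemma pi_plus_minus_cases:
  obtains u w where "u \<in> Cpm n'" and "w \<in> Cpm n'" and "q = pi_plus u + pi_minus w"
proof -
  obtain u w where "rep n' \<pi> q = (u, w)" by fastforce
  then show ?thesis using that rep_in_Vsp[of q] pi_pair by (auto simp: Vsp_def)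
qed

lemma rep_pair:
  assumes "u \<in> Cpm n'" and "w \<in> Cpm n'"
  obtains r1 r2 where "rep n' \<pi> (pi_plus u + pi_minus w) = (r1, r2)"
    and "r1 \<in> Cpm n'" and "r2 \<in> Cpm n'" and "pi_plus r1 = pi_plus u" and "pi_minus r2 = pi_minus w"
proof -
  obtain r1 r2 where r: "rep n' \<pi> (pi_plus u + pi_minus w) = (r1, r2)" by fastforce
  then have r12: "r1 \<in> Cpm n'" "r2 \<in> Cpm n'"
    using rep_in_Vsp[of "pi_plus u + pi_minus w"] by (auto simp: Vsp_def)
  have "pi_plus r1 + pi_minus r2 = pi_plus u + pi_minus w"
    using rep_in_Vsp[of "pi_plus u + pi_minus w"] unfolding r pi_pair[OF r12] by blast
  then show ?thesis
    using that[OF r r12] q1_q2_sum_eq_imp[OF r12 assms] by blast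
qed

lemma Pq_pair:
  assumes "u \<in> Cpm n'" and "w \<in> Cpm n'"
  shows "Pq n' \<pi> (pi_plus u + pi_minus w) = pi_plus u - pi_minus w"
proof -
  obtain r1 r2 where r: "rep n' \<pi> (pi_plus u + pi_minus w) = (r1, r2)" "r1 \<in> Cpm n'" "r2 \<in> Cpm n'"
    "pi_plus r1 = pi_plus u" "pi_minus r2 = pi_minus w"
    using rep_pair[OF assms] .
  have "Pq n' \<pi> (pi_plus u + pi_minus w) = \<pi> (r1, - r2)"
    using r(1-3) by (simp add: Pq_def phi_def Pop_def Wproj_eq_trunc trunc_id Cpm_closed(4))
  also have "\<dots> = pi_plus u - pi_minus w"
    using r(2-5) by (simp add: pi_pair Cpm_closed(4) q2_minus)
  finally show ?thesis .
qed

lemma dq_pair: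
  assumes "u \<in> Cpm n'" and "w \<in> Cpm n'"
  shows "dq n' \<delta> \<pi> (pi_plus u + pi_minus w) = mirror.reduced_A w + reduced_A u"
proof -
  obtain r1 r2 where r: "rep n' \<pi> (pi_plus u + pi_minus w) = (r1, r2)" "r1 \<in> Cpm n'" "r2 \<in> Cpm n'"
    "pi_plus r1 = pi_plus u" "pi_minus r2 = pi_minus w"
    using rep_pair[OF assms] .
  have "dq n' \<delta> \<pi> (pi_plus u + pi_minus w) = \<pi> (trunc n' (dpm \<delta> r2), trunc n' (dmp \<delta> r1))"
    using r(1-3) by (simp add: dq_def phi_def Wproj_eq_trunc delta_pair Cpm_le)
  also have "\<dots> = mirror.reduced_A r2 + reduced_A r1"
    by (simp add: pi_pair reduced_A_def mirror.reduced_A_def)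
  also have "\<dots> = mirror.reduced_A w + reduced_A u"
    using reduced_A_eq_if_q1_eq[OF r(2) assms(1) r(4)]
      mirror.reduced_A_eq_if_q1_eq[OF r(3) assms(2) r(5)] by simp
  finally show ?thesis .
qed

lemma proj_plus_pair:
  assumes "u \<in> Cpm n'" and "w \<in> Cpm n'"
  shows "proj_plus scaleQ n' \<pi> (pi_plus u + pi_minus w) = pi_plus u"
proof -
  have "pi_plus u + pi_minus w + (pi_plus u - pi_minus w) = pi_plus u + pi_plus u"
    by (simp add: algebra_simps)
  then show ?thesis
    unfolding proj_plus_def Pq_pair[OF assms] by (simp only: Q.scale_half_double[OF two_neq_zero])
qed

lemma proj_minus_pair:
  assumes "u \<in> Cpm n'" and "w \<in> Cpm n'"
  shows "proj_minus scaleQ n' \<pi> (pi_plus u + pi_minus w) = pi_minus w"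
proof -
  have "pi_plus u + pi_minus w - (pi_plus u - pi_minus w) = pi_minus w + pi_minus w"
    by (simp add: algebra_simps)
  then show ?thesis
    unfolding proj_minus_def Pq_pair[OF assms] by (simp only: Q.scale_half_double[OF two_neq_zero])
qed

lemma Vq_plus_eq: "Vq_plus n' \<pi> = pi_plus ` Cpm n'"
proof (intro equalityI subsetI)
  fix q assume q: "q \<in> Vq_plus n' \<pi>"
  obtain u w where uw: "u \<in> Cpm n'" "w \<in> Cpm n'" "q = pi_plus u + pi_minus w"
    by (rule pi_plus_minus_cases)
  have eigen: "pi_plus u - pi_minus w = pi_plus u + pi_minus w"
    using q unfolding Vq_plus_def mem_Collect_eq uw(3) Pq_pair[OF uw(1,2)] .
  have "pi_minus w + pi_minus w = (pi_plus u + pi_minus w) - (pi_plus u - pi_minus w)"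
    by (simp add: algebra_simps)
  also have "\<dots> = 0" unfolding eigen by simp
  finally have "pi_minus w = 0" by (rule Q.double_eq_zero[OF two_neq_zero])
  then have "q = pi_plus u" using uw(3) by simp
  then show "q \<in> pi_plus ` Cpm n'" using uw(1) by blast
next
  fix q assume "q \<in> pi_plus ` Cpm n'"
  then obtain u where "u \<in> Cpm n'" "q = pi_plus u" by blast
  then show "q \<in> Vq_plus n' \<pi>"
    using Pq_pair[OF _ Cpm_closed(1), of u] by (simp add: Vq_plus_def q2_zero)
qed

lemma Vq_minus_eq: "Vq_minus n' \<pi> = pi_minus ` Cpm n'"
proof (intro equalityI subsetI)
  fix q assume q: "q \<in> Vq_minus n' \<pi>"
  obtain u w where uw: "u \<in> Cpm n'" "w \<in> Cpm n'" "q = pi_plus u + pi_minus w"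
    by (rule pi_plus_minus_cases)
  have eigen: "pi_plus u - pi_minus w = - (pi_plus u + pi_minus w)"
    using q unfolding Vq_minus_def mem_Collect_eq uw(3) Pq_pair[OF uw(1,2)] .
  have "pi_plus u + pi_plus u = (pi_plus u - pi_minus w) + (pi_plus u + pi_minus w)"
    by (simp add: algebra_simps)
  also have "\<dots> = 0" unfolding eigen by simp
  finally have "pi_plus u = 0" by (rule Q.double_eq_zero[OF two_neq_zero])
  then have "q = pi_minus w" using uw(3) by simp
  then show "q \<in> pi_minus ` Cpm n'" using uw(2) by blast
next
  fix q assume "q \<in> pi_minus ` Cpm n'"
  then obtain w where "w \<in> Cpm n'" "q = pi_minus w" by blast
  then show "q \<in> Vq_minus n' \<pi>"
    using Pq_pair[OF Cpm_closed(1), of w] by (simp add: Vq_minus_def q1_zero)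
qed

lemma dq_mp_pi_plus:
  assumes "u \<in> Cpm n'"
  shows "dq_mp scaleQ n' \<delta> \<pi> (pi_plus u) = reduced_A u"
proof -
  have "dq n' \<delta> \<pi> (pi_plus u) = pi_plus 0 + pi_minus (trunc n' (dmp \<delta> u))"
    using dq_pair[OF assms Cpm_closed(1)]
    by (simp add: q1_zero q2_zero reduced_A_def mirror.reduced_A_def swap.A_zero trunc_linear(1))
  then show ?thesis
    using proj_minus_pair[OF Cpm_closed(1) trunc_Cpm] by (simp add: dq_mp_def reduced_A_def)
qed

lemma dq_pm_pi_minus:
  assumes "w \<in> Cpm n'"
  shows "dq_pm scaleQ n' \<delta> \<pi> (pi_minus w) = mirror.reduced_A w"
proof -
  have "dq n' \<delta> \<pi> (pi_minus w) = pi_plus (trunc n' (dpm \<delta> w)) + pi_minus 0"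
    using dq_pair[OF Cpm_closed(1) assms]
    by (simp add: q1_zero q2_zero reduced_A_def mirror.reduced_A_def A_zero trunc_linear(1))
  then show ?thesis
    using proj_plus_pair[OF trunc_Cpm Cpm_closed(1)] by (simp add: dq_pm_def mirror.reduced_A_def)
qed

lemma kernel_dq_mp:
  "{q \<in> Vq_plus n' \<pi>. dq_mp scaleQ n' \<delta> \<pi> q = 0} = pi_plus ` {u \<in> Cpm n'. reduced_A u = 0}"
  unfolding Vq_plus_eq using dq_mp_pi_plus by auto

lemma image_dq_mp: "dq_mp scaleQ n' \<delta> \<pi> ` Vq_plus n' \<pi> = reduced_A ` Cpm n'"
  unfolding Vq_plus_eq image_image by (rule image_cong[OF refl dq_mp_pi_plus])

lemma kernel_dq_pm:
  "{q \<in> Vq_minus n' \<pi>. dq_pm scaleQ n' \<delta> \<pi> q = 0} = pi_minus ` {w \<in> Cpm n'. mirror.reduced_A w = 0}"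
  unfolding Vq_minus_eq using dq_pm_pi_minus by auto

lemma image_dq_pm: "dq_pm scaleQ n' \<delta> \<pi> ` Vq_minus n' \<pi> = mirror.reduced_A ` Cpm n'"
  unfolding Vq_minus_eq image_image by (rule image_cong[OF refl dq_pm_pi_minus])

end

theorem lemma3:
  fixes D n n' :: nat
    and \<delta> :: "'a::field cvec \<Rightarrow> 'a cvec"
    and scaleQ :: "'a \<Rightarrow> 'q::ab_group_add \<Rightarrow> 'q"
    and \<pi> :: "'a cvec \<Rightarrow> 'q"
  assumes "prime D" and "odd D" and "card (UNIV :: 'a set) = D"
    and "n' \<le> n"
    and "good n n' \<delta>"
    and "quotient_map n n' \<delta> scaleQ \<pi>"
  shows "(int (vector_space.dim scaleQ (Vq_plus n' \<pi>)) = 2 * int n' - int n) \<and>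
    (int (vector_space.dim scaleQ (Vq_minus n' \<pi>)) = 2 * int n' - int n) \<and>
    (int (vector_space.dim scaleQ {q \<in> Vq_plus n' \<pi>. dq_mp scaleQ n' \<delta> \<pi> q = 0})
           = int (vector_space.dim scaleF {u \<in> Cpm n. dmp \<delta> u = 0}) - (int n - int n')) \<and>
    (int (vector_space.dim scaleQ (dq_mp scaleQ n' \<delta> \<pi> ` Vq_plus n' \<pi>))
           = int (vector_space.dim scaleF (dmp \<delta> ` Cpm n)) - (int n - int n')) \<and>
    (int (vector_space.dim scaleQ {q \<in> Vq_minus n' \<pi>. dq_pm scaleQ n' \<delta> \<pi> q = 0})
           = int (vector_space.dim scaleF {w \<in> Cpm n. dpm \<delta> w = 0}) - (int n - int n')) \<and>
    (int (vector_space.dim scaleQ (dq_pm scaleQ n' \<delta> \<pi> ` Vq_minus n' \<pi>))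
           = int (vector_space.dim scaleF (dpm \<delta> ` Cpm n)) - (int n - int n'))"
proof -
  have odd_card: "odd (card (UNIV :: 'a set))" using assms(2,3) by simp
  then have fin: "finite (UNIV :: 'a set)" by (intro card_ge_0_finite) (simp add: odd_pos)
  have "boundary_op n \<delta>" using assms(5) by (simp add: good_def)
  then interpret good_reduction n \<delta> n' scaleQ \<pi>
    using two_neq_zero_if_odd_card[OF odd_card] assms(4-6) by unfold_locales
  show ?thesis
    unfolding kernel_dq_mp image_dq_mp kernel_dq_pm image_dq_pm
    unfolding Vq_plus_eq Vq_minus_eq
    using dim_q1_image[OF fin] dim_kernel_reduced_A[OF fin] dim_image_reduced_A[OF fin]
      mirror.dim_q1_image[OF fin] mirror.dim_kernel_reduced_A[OF fin]
      mirror.dim_image_reduced_A[OF fin]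
    by simp
qed

end
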